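(* Let $X,X_1$ be i.i.d. positive random variables with $\mathbb{E}X=1$, let $p\ge2$ be an integer and let $1<\alpha\le p+2$. Suppose $\mathbb{P}\{X\ge x\}=O(x^{-p-\alpha})$ as $x\to\infty$. Then, as $n\to\infty$, $$\mathbb{E}\frac{X_1^{2p}}{\left(\frac1nX_1+1\right)^{p+1}}=O(n^{p-\alpha+2})$$ and $$\mathbb{E}\frac{X_1^{2p}}{\left(\frac1nX_1+1\right)^{p+1}}X_1^2=O(n^{p-\alpha+2}\log n).$$ *)

theory Defs
  imports "HOL-Probability.Probability" "HOL-Library.Landau_Symbols"
begin

end

theory Submission
  imports Defs
begin

(* Let q = p + alpha, so that P(X1 >= x) = O(x^-q), and s = p - alpha + 2.  Since
   y / (y/n + 1) <= min y n, the first integrand is at most n^s min(X1, n)^(alpha - 1) X1^(p - 1)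
   <= n^s X1^(q - 2), and moments of order below q are finite.  The second integrand is at most
   n^s min(X1, n)^c X1^(q - c) with c = alpha - 1, a truncated moment of the critical order q.
   Splitting the sample space into the dyadic shells 2^k <= X1 < 2^(k+1), each of the about
   log2 n shells below n contributes O(1) and the shells above n contribute a convergent
   geometric series, so this moment is O(log n). *)

lemma power_powr_eq:
  fixes a x :: real
  assumes "0 < a"
  shows "(a ^ m) powr x = a powr (real m * x)"
  using assms by (simp add: powr_realpow[symmetric] powr_powr)

lemma ex_dyadic_interval:
  fixes y :: real
  assumes "1 \<le> y"
  obtains k :: nat where "2 ^ k \<le> y" "y < 2 ^ (k + 1)"
proof
  define k where "k = nat \<lfloor>log 2 y\<rfloor>"
  have "real k = \<lfloor>log 2 y\<rfloor>"
    using assms by (simp add: k_def)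
  moreover have "2 powr \<lfloor>log 2 y\<rfloor> \<le> y \<and> y < 2 powr (\<lfloor>log 2 y\<rfloor> + 1)"
    using floor_log_eq_powr_iff[of y 2 "\<lfloor>log 2 y\<rfloor>"] assms by simp
  ultimately have "2 powr real k \<le> y" "y < 2 powr real (k + 1)"
    by (simp_all add: add.commute)
  then show "2 ^ k \<le> y" "y < 2 ^ (k + 1)"
    using powr_realpow[of 2 k] powr_realpow[of 2 "k + 1"] by simp_all
qed

lemma ex_dyadic_cover:
  fixes N :: real
  assumes "1 \<le> N"
  obtains K :: nat where "N \<le> 2 ^ K" "real K \<le> 1 + log 2 N"
proof -
  obtain k where k: "2 ^ k \<le> N" "N < 2 ^ (k + 1)"
    using ex_dyadic_interval[OF assms] .
  have "real k \<le> log 2 N"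
    using k assms by (simp add: le_log_iff powr_realpow)
  with k show ?thesis
    by (intro that[of "k + 1"]) simp_all
qed

lemma ennreal_le_dyadic_sum:
  fixes \<phi> :: "real \<Rightarrow> real"
  assumes mono: "mono_on {0<..} \<phi>" and "0 < y"
  shows "ennreal (\<phi> y) \<le> ennreal (\<phi> 1) + (\<Sum>k. ennreal (\<phi> (2 ^ (k + 1))) * indicator {z. 2 ^ k \<le> z} y)"
proof (cases "y < 1")
  case True
  then have "\<phi> y \<le> \<phi> 1"
    using \<open>0 < y\<close> by (intro mono_onD[OF mono]) auto
  then show ?thesis
    by (intro add_increasing2 ennreal_leI) simp_all
next
  case False
  then have "1 \<le> y"
    by simp
  then obtain k where k: "2 ^ k \<le> y" "y < 2 ^ (k + 1)"
    by (rule ex_dyadic_interval)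
  have "\<phi> y \<le> \<phi> (2 ^ (k + 1))"
    using \<open>0 < y\<close> k by (intro mono_onD[OF mono]) auto
  then have "ennreal (\<phi> y) \<le> ennreal (\<phi> (2 ^ (k + 1))) * indicator {z. 2 ^ k \<le> z} y"
    using k by (simp add: ennreal_leI)
  also have "\<dots> \<le> (\<Sum>k. ennreal (\<phi> (2 ^ (k + 1))) * indicator {z. 2 ^ k \<le> z} y)"
    using sum_le_suminf[OF summableI, of "{k}"] by simp
  finally show ?thesis
    by (simp add: add_increasing)
qed

lemma sums_power_diff:
  fixes \<rho> :: real
  assumes "0 \<le> \<rho>" "\<rho> < 1"
  shows "(\<lambda>k. \<rho> ^ (k - K)) sums (real K + 1 / (1 - \<rho>))"
proof -
  have "(\<lambda>k. \<rho> ^ (k - K)) sums (1 / (1 - \<rho>) + (\<Sum>k<K. \<rho> ^ (k - K)))"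
    using geometric_sums[of \<rho>] assms sums_iff_shift[of "\<lambda>k. \<rho> ^ (k - K)" K] by simp
  moreover have "(\<Sum>k<K. \<rho> ^ (k - K)) = real K"
    by simp
  ultimately show ?thesis
    by (simp add: add.commute)
qed

lemma div_one_plus_div_le_min:
  fixes y n :: real
  assumes "0 < y" "0 < n"
  shows "y / (y / n + 1) \<le> min y n"
  using assms by (auto simp: field_simps)

lemma power_div_one_plus_div_le:
  fixes y n s :: real and m k :: nat
  assumes "0 < y" "0 < n" "0 \<le> s" "s \<le> m"
  shows "y ^ (m + k) / (y / n + 1) ^ m \<le> n powr s * (min y n powr (m - s) * y ^ k)"
proof -
  have "y ^ (m + k) / (y / n + 1) ^ m = (y / (y / n + 1)) ^ m * y ^ k"
    by (simp add: power_add power_divide)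
  also have "\<dots> \<le> min y n ^ m * y ^ k"
    using assms div_one_plus_div_le_min[OF assms(1,2)]
    by (intro mult_right_mono power_mono) (auto simp: add_pos_pos)
  also have "min y n ^ m = min y n powr s * min y n powr (m - s)"
    using assms by (simp add: powr_realpow[symmetric] powr_add[symmetric])
  also have "\<dots> \<le> n powr s * min y n powr (m - s)"
    using assms by (intro mult_right_mono powr_mono2) auto
  finally show ?thesis
    using assms by (simp add: mult.assoc)
qed

lemma power_ratio_le_truncated_powr:
  fixes y n \<alpha> :: real and p :: nat
  assumes "0 < y" "0 < n" "1 \<le> p" "1 \<le> \<alpha>" "\<alpha> \<le> real p + 2"
  shows "y ^ (2 * p) / (y / n + 1) ^ (p + 1)
    \<le> n powr (real p - \<alpha> + 2) * (min y n powr (\<alpha> - 1) * y powr (real p - 1))"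
proof -
  have "y ^ (2 * p) / (y / n + 1) ^ (p + 1) = y ^ ((p + 1) + (p - 1)) / (y / n + 1) ^ (p + 1)"
    using \<open>1 \<le> p\<close> by (simp add: mult_2)
  also have "\<dots> \<le> n powr (real p - \<alpha> + 2)
      * (min y n powr (real (p + 1) - (real p - \<alpha> + 2)) * y ^ (p - 1))"
    using assms by (intro power_div_one_plus_div_le) auto
  also have "\<dots> = n powr (real p - \<alpha> + 2) * (min y n powr (\<alpha> - 1) * y powr (real p - 1))"
    using assms by (simp add: powr_realpow[symmetric] of_nat_diff)
  finally show ?thesis .
qed

lemma power_ratio_le_powr:
  fixes y n \<alpha> :: real and p :: nat
  assumes "0 < y" "0 < n" "1 \<le> p" "1 \<le> \<alpha>" "\<alpha> \<le> real p + 2"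
  shows "y ^ (2 * p) / (y / n + 1) ^ (p + 1) \<le> n powr (real p - \<alpha> + 2) * y powr (real p + \<alpha> - 2)"
proof -
  have "y ^ (2 * p) / (y / n + 1) ^ (p + 1)
      \<le> n powr (real p - \<alpha> + 2) * (min y n powr (\<alpha> - 1) * y powr (real p - 1))"
    using assms by (rule power_ratio_le_truncated_powr)
  also have "\<dots> \<le> n powr (real p - \<alpha> + 2) * (y powr (\<alpha> - 1) * y powr (real p - 1))"
    using assms by (intro mult_left_mono mult_right_mono powr_mono2) auto
  also have "\<dots> = n powr (real p - \<alpha> + 2) * y powr (real p + \<alpha> - 2)"
    by (simp add: powr_add[symmetric] add.commute)
  finally show ?thesis .
qed

lemma power_ratio_times_square_le_truncated_powr:
  fixes y n \<alpha> :: real and p :: nat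
  assumes "0 < y" "0 < n" "1 \<le> p" "1 \<le> \<alpha>" "\<alpha> \<le> real p + 2"
  shows "y ^ (2 * p) / (y / n + 1) ^ (p + 1) * y ^ 2
    \<le> n powr (real p - \<alpha> + 2) * (min y n powr (\<alpha> - 1) * y powr (real p + 1))"
proof -
  have "y powr (real p - 1) * y ^ 2 = y powr (real p - 1) * y powr 2"
    using \<open>0 < y\<close> by simp
  also have "\<dots> = y powr (real p + 1)"
    by (subst powr_add[symmetric]) (simp add: add.commute)
  finally have powers: "y powr (real p - 1) * y ^ 2 = y powr (real p + 1)" .
  have "y ^ (2 * p) / (y / n + 1) ^ (p + 1) * y ^ 2
      \<le> n powr (real p - \<alpha> + 2) * (min y n powr (\<alpha> - 1) * y powr (real p - 1)) * y ^ 2"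
    using assms by (intro mult_right_mono power_ratio_le_truncated_powr) auto
  then show ?thesis
    by (simp add: powers[symmetric] mult.assoc)
qed

(* For k \<le> K the truncated subtraction k - K is 0 and the bound is the constant 2 powr q. *)
lemma truncated_dyadic_term_le:
  fixes N c q :: real and k K :: nat
  assumes "0 < c" "c \<le> q" "0 \<le> N" "N \<le> 2 ^ K"
  shows "min (2 ^ (k + 1)) N powr c * (2 ^ (k + 1)) powr (q - c) * (2 ^ k) powr -q
    \<le> 2 powr q * (2 powr -c) ^ (k - K)"
proof (cases "k \<le> K")
  case True
  have "min (2 ^ (k + 1)) N powr c \<le> (2 ^ (k + 1)) powr c"
    using assms by (intro powr_mono2) auto
  then have "min (2 ^ (k + 1)) N powr c * (2 ^ (k + 1)) powr (q - c) * (2 ^ k) powr -q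
      \<le> (2 ^ (k + 1)) powr c * (2 ^ (k + 1)) powr (q - c) * (2 ^ k) powr -q"
    by (intro mult_right_mono) auto
  also have "\<dots> = 2 powr q"
    unfolding power_powr_eq[OF zero_less_numeral] by (simp add: powr_add[symmetric] algebra_simps)
  finally show ?thesis
    using True by simp
next
  case False
  have "min (2 ^ (k + 1)) N powr c \<le> (2 ^ K) powr c"
    using assms by (intro powr_mono2) auto
  then have "min (2 ^ (k + 1)) N powr c * (2 ^ (k + 1)) powr (q - c) * (2 ^ k) powr -q
      \<le> (2 ^ K) powr c * (2 ^ (k + 1)) powr (q - c) * (2 ^ k) powr -q"
    by (intro mult_right_mono) auto
  also have "\<dots> = 2 powr (q - c - c * (real k - real K))"
    unfolding power_powr_eq[OF zero_less_numeral] by (simp add: powr_add[symmetric] algebra_simps)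
  also have "\<dots> \<le> 2 powr (q - c * (real k - real K))"
    using assms by (intro powr_mono) auto
  also have "\<dots> = 2 powr q * (2 powr -c) ^ (k - K)"
    using False by (simp add: powr_power of_nat_diff powr_add[symmetric] algebra_simps)
  finally show ?thesis .
qed

lemma truncated_dyadic_series:
  fixes c q C N :: real
  assumes "0 < c" "c \<le> q" "0 \<le> C" "1 \<le> N"
  defines "t \<equiv> \<lambda>k::nat. min (2 ^ (k + 1)) N powr c * (2 ^ (k + 1)) powr (q - c) * (C * (2 ^ k) powr -q)"
  shows "summable t" and "suminf t \<le> C * 2 powr q * ((1 + ln N) / ln 2 + 1 / (1 - 2 powr -c))"
proof -
  obtain K where K: "N \<le> 2 ^ K" "real K \<le> 1 + log 2 N"
    using ex_dyadic_cover[OF \<open>1 \<le> N\<close>] .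
  define \<rho> where "\<rho> = 2 powr -c"
  have \<rho>: "0 < \<rho>" "\<rho> < 1"
    using \<open>0 < c\<close> by (auto simp: \<rho>_def powr_less_one)
  have t_le: "t k \<le> C * 2 powr q * \<rho> ^ (k - K)" for k
    using mult_left_mono[OF truncated_dyadic_term_le[of c q N K k] \<open>0 \<le> C\<close>] assms K
    by (simp add: t_def \<rho>_def mult_ac)
  have t_nonneg: "0 \<le> t k" for k
    using \<open>0 \<le> C\<close> by (simp add: t_def)
  have geometric: "(\<lambda>k. C * 2 powr q * \<rho> ^ (k - K)) sums (C * 2 powr q * (real K + 1 / (1 - \<rho>)))"
    using sums_power_diff[of \<rho> K] \<rho> by (intro sums_mult) auto
  show "summable t"
  proof (rule summable_comparison_test'[where N = 0, OF sums_summable[OF geometric]])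
    show "norm (t k) \<le> C * 2 powr q * \<rho> ^ (k - K)" for k
      using t_le[of k] t_nonneg[of k] by simp
  qed
  then have "suminf t \<le> C * 2 powr q * (real K + 1 / (1 - \<rho>))"
    using suminf_le[OF t_le _ sums_summable[OF geometric]] sums_unique[OF geometric] by simp
  also have "\<dots> \<le> C * 2 powr q * ((1 + ln N) / ln 2 + 1 / (1 - \<rho>))"
  proof -
    have "real K \<le> (1 + ln N) / ln 2"
      using K ln_le_minus_one[of 2] by (simp add: log_def field_simps)
    then show ?thesis
      using \<open>0 \<le> C\<close> by (intro mult_left_mono add_right_mono) auto
  qed
  finally show "suminf t \<le> C * 2 powr q * ((1 + ln N) / ln 2 + 1 / (1 - 2 powr -c))"
    by (simp add: \<rho>_def)
qed

lemma nn_integral_le_cmult_of_le: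
  fixes f h :: "'a \<Rightarrow> real"
  assumes [measurable]: "h \<in> borel_measurable M"
    and "\<And>\<omega>. \<omega> \<in> space M \<Longrightarrow> f \<omega> \<le> a * h \<omega>" "0 \<le> a"
    and "(\<integral>\<^sup>+\<omega>. h \<omega> \<partial>M) \<le> ennreal b" "0 \<le> b"
  shows "(\<integral>\<^sup>+\<omega>. f \<omega> \<partial>M) \<le> ennreal (a * b)"
proof -
  have "(\<integral>\<^sup>+\<omega>. f \<omega> \<partial>M) \<le> (\<integral>\<^sup>+\<omega>. ennreal a * h \<omega> \<partial>M)"
    using assms by (intro nn_integral_mono) (simp add: ennreal_mult'[symmetric] ennreal_leI)
  also have "\<dots> = ennreal a * (\<integral>\<^sup>+\<omega>. h \<omega> \<partial>M)"
    by (rule nn_integral_cmult) measurable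
  also have "\<dots> \<le> ennreal a * ennreal b"
    using assms(4) by (rule mult_left_mono) simp
  also have "\<dots> = ennreal (a * b)"
    using assms by (simp add: ennreal_mult)
  finally show ?thesis .
qed

lemma bigo_integral_of_nn_integral_le:
  fixes f :: "'b \<Rightarrow> 'a \<Rightarrow> real" and g :: "'b \<Rightarrow> real"
  assumes "0 < K" and nonneg: "\<And>n \<omega>. \<omega> \<in> space M \<Longrightarrow> 0 \<le> f n \<omega>"
    and bound: "\<forall>\<^sub>F n in F. 0 \<le> g n \<and> (\<integral>\<^sup>+\<omega>. f n \<omega> \<partial>M) \<le> ennreal (K * g n)"
  shows "(\<lambda>n. integral\<^sup>L M (f n)) \<in> O[F](g)"
proof (rule landau_o.bigI[OF \<open>0 < K\<close>])
  show "\<forall>\<^sub>F n in F. norm (integral\<^sup>L M (f n)) \<le> K * norm (g n)"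
    using bound
  proof eventually_elim
    case (elim n)
    then have "integral\<^sup>L M (f n) \<le> K * g n"
      using \<open>0 < K\<close> by (intro integral_real_bounded) auto
    moreover have "0 \<le> integral\<^sup>L M (f n)"
      using nonneg by simp
    ultimately show ?case
      using elim by simp
  qed
qed

context prob_space
begin

lemma prob_ge_eq_of_distr_eq:
  fixes X Y :: "'a \<Rightarrow> real"
  assumes [measurable]: "X \<in> borel_measurable M" "Y \<in> borel_measurable M"
    and "distr M borel X = distr M borel Y"
  shows "prob {\<omega>\<in>space M. x \<le> X \<omega>} = prob {\<omega>\<in>space M. x \<le> Y \<omega>}"
proof -
  have "prob {\<omega>\<in>space M. x \<le> Z \<omega>} = measure (distr M borel Z) {x..}"
    if [measurable]: "Z \<in> borel_measurable M" for Z :: "'a \<Rightarrow> real"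
    by (subst measure_distr) (auto intro!: arg_cong[where f = prob])
  then show ?thesis
    using assms by simp
qed

lemma tail_bound_of_bigo:
  fixes Y :: "'a \<Rightarrow> real"
  assumes "(\<lambda>x. prob {\<omega>\<in>space M. x \<le> Y \<omega>}) \<in> O[at_top](\<lambda>x. x powr -q)" "0 \<le> q"
  obtains C where "\<And>x. 1 \<le> x \<Longrightarrow> prob {\<omega>\<in>space M. x \<le> Y \<omega>} \<le> C * x powr -q"
proof -
  obtain c where "0 < c"
    and "\<forall>\<^sub>F x in at_top. norm (prob {\<omega>\<in>space M. x \<le> Y \<omega>}) \<le> c * norm (x powr -q)"
    using landau_o.bigE[OF assms(1)] by blast
  then obtain x0 where x0: "\<And>x. x \<ge> x0 \<Longrightarrow> prob {\<omega>\<in>space M. x \<le> Y \<omega>} \<le> c * x powr -q"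
    by (auto simp: eventually_at_top_linorder)
  define x1 where "x1 = max x0 1"
  show ?thesis
  proof (rule that[of "max c (x1 powr q)"])
    fix x :: real
    assume "1 \<le> x"
    show "prob {\<omega>\<in>space M. x \<le> Y \<omega>} \<le> max c (x1 powr q) * x powr -q"
    proof (cases "x1 \<le> x")
      case True
      then have "prob {\<omega>\<in>space M. x \<le> Y \<omega>} \<le> c * x powr -q"
        by (intro x0) (simp add: x1_def)
      also have "\<dots> \<le> max c (x1 powr q) * x powr -q"
        by (intro mult_right_mono) auto
      finally show ?thesis .
    next
      case False
      have "prob {\<omega>\<in>space M. x \<le> Y \<omega>} \<le> x1 powr q * x1 powr -q"
        by (simp add: x1_def powr_minus)
      also have "\<dots> \<le> max c (x1 powr q) * x powr -q"
        using False \<open>1 \<le> x\<close> assms(2)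
        by (intro mult_mono powr_mono2') (auto simp: le_max_iff_disj)
      finally show ?thesis .
    qed
  qed
qed

lemma nn_integral_le_dyadic_tail_sum:
  fixes Y :: "'a \<Rightarrow> real" and \<phi> :: "real \<Rightarrow> real" and g :: "nat \<Rightarrow> real"
  assumes [measurable]: "Y \<in> borel_measurable M" and Y_pos: "\<And>\<omega>. \<omega> \<in> space M \<Longrightarrow> 0 < Y \<omega>"
    and mono: "mono_on {0<..} \<phi>" and nonneg: "\<And>y. 0 < y \<Longrightarrow> 0 \<le> \<phi> y"
    and tail: "\<And>k. prob {\<omega>\<in>space M. 2 ^ k \<le> Y \<omega>} \<le> g k"
    and summable: "summable (\<lambda>k. \<phi> (2 ^ (k + 1)) * g k)"
  shows "(\<integral>\<^sup>+\<omega>. \<phi> (Y \<omega>) \<partial>M) \<le> ennreal (\<phi> 1 + (\<Sum>k. \<phi> (2 ^ (k + 1)) * g k))"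
proof -
  define A where "A k = {\<omega>\<in>space M. 2 ^ k \<le> Y \<omega>}" for k :: nat
  have [measurable]: "A k \<in> events" for k
    unfolding A_def by measurable
  have g_nonneg: "0 \<le> g k" for k
    using tail[of k] measure_nonneg order_trans by blast
  have terms_nonneg: "0 \<le> \<phi> (2 ^ (k + 1)) * g k" for k
    using nonneg g_nonneg by simp
  have pointwise: "ennreal (\<phi> (Y \<omega>))
      \<le> ennreal (\<phi> 1) + (\<Sum>k. ennreal (\<phi> (2 ^ (k + 1))) * indicator (A k) \<omega>)"
    if "\<omega> \<in> space M" for \<omega>
    using ennreal_le_dyadic_sum[OF mono Y_pos[OF that]] that by (simp add: A_def indicator_def)
  have "(\<integral>\<^sup>+\<omega>. \<phi> (Y \<omega>) \<partial>M)
      \<le> (\<integral>\<^sup>+\<omega>. ennreal (\<phi> 1) + (\<Sum>k. ennreal (\<phi> (2 ^ (k + 1))) * indicator (A k) \<omega>) \<partial>M)"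
    by (intro nn_integral_mono pointwise)
  also have "\<dots> = (\<integral>\<^sup>+\<omega>. ennreal (\<phi> 1) \<partial>M)
      + (\<integral>\<^sup>+\<omega>. (\<Sum>k. ennreal (\<phi> (2 ^ (k + 1))) * indicator (A k) \<omega>) \<partial>M)"
    by (rule nn_integral_add) measurable
  also have "\<dots> = ennreal (\<phi> 1) + (\<Sum>k. ennreal (\<phi> (2 ^ (k + 1))) * emeasure M (A k))"
    by (simp add: nn_integral_suminf nn_integral_cmult_indicator emeasure_space_1)
  also have "\<dots> \<le> ennreal (\<phi> 1) + (\<Sum>k. ennreal (\<phi> (2 ^ (k + 1)) * g k))"
  proof (intro add_left_mono suminf_le summableI)
    fix k
    have "emeasure M (A k) \<le> ennreal (g k)"
      using tail[of k] by (simp add: A_def emeasure_eq_measure ennreal_leI)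
    then show "ennreal (\<phi> (2 ^ (k + 1))) * emeasure M (A k) \<le> ennreal (\<phi> (2 ^ (k + 1)) * g k)"
      using nonneg[of "2 ^ (k + 1)"] by (simp add: ennreal_mult' mult_left_mono)
  qed
  also have "\<dots> = ennreal (\<phi> 1) + ennreal (\<Sum>k. \<phi> (2 ^ (k + 1)) * g k)"
    by (simp only: suminf_ennreal2[OF terms_nonneg summable])
  also have "\<dots> = ennreal (\<phi> 1 + (\<Sum>k. \<phi> (2 ^ (k + 1)) * g k))"
    using nonneg[of 1] suminf_nonneg[OF summable terms_nonneg] by (simp add: ennreal_plus)
  finally show ?thesis .
qed

lemma tail_const_nonneg:
  assumes "\<And>x. 1 \<le> x \<Longrightarrow> prob {\<omega>\<in>space M. x \<le> Y \<omega>} \<le> C * x powr -q"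
  shows "0 \<le> C"
proof -
  have "prob {\<omega>\<in>space M. 1 \<le> Y \<omega>} \<le> C"
    using assms[of 1] by simp
  then show ?thesis
    using measure_nonneg order_trans by blast
qed

lemma nn_integral_powr_bounded_of_tail:
  fixes Y :: "'a \<Rightarrow> real"
  assumes "Y \<in> borel_measurable M" "\<And>\<omega>. \<omega> \<in> space M \<Longrightarrow> 0 < Y \<omega>"
    and tail: "\<And>x. 1 \<le> x \<Longrightarrow> prob {\<omega>\<in>space M. x \<le> Y \<omega>} \<le> C * x powr -q"
    and "0 \<le> r" "r < q"
  obtains B where "0 < B" "(\<integral>\<^sup>+\<omega>. Y \<omega> powr r \<partial>M) \<le> ennreal B"
proof -
  define \<rho> where "\<rho> = 2 powr (r - q)"
  have \<rho>: "0 < \<rho>" "\<rho> < 1"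
    using \<open>r < q\<close> by (auto simp: \<rho>_def powr_less_one)
  have terms: "(2 ^ (k + 1)) powr r * (C * (2 ^ k) powr -q) = C * 2 powr r * \<rho> ^ k" for k :: nat
    unfolding \<rho>_def power_powr_eq[OF zero_less_numeral]
    by (simp add: powr_power powr_add[symmetric] algebra_simps)
  have "(\<integral>\<^sup>+\<omega>. Y \<omega> powr r \<partial>M)
      \<le> ennreal (1 powr r + (\<Sum>k. (2 ^ (k + 1)) powr r * (C * (2 ^ k) powr -q)))"
  proof (rule nn_integral_le_dyadic_tail_sum)
    show "mono_on {0<..} (\<lambda>y. y powr r)"
      using \<open>0 \<le> r\<close> by (auto intro!: mono_onI powr_mono2)
    show "summable (\<lambda>k. (2 ^ (k + 1)) powr r * (C * (2 ^ k) powr -q))"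
      unfolding terms using \<rho> by (intro summable_mult summable_geometric) auto
  qed (use assms in auto)
  also have "(\<Sum>k. (2 ^ (k + 1)) powr r * (C * (2 ^ k) powr -q)) = C * 2 powr r / (1 - \<rho>)"
    unfolding terms using \<rho> by (simp add: suminf_mult suminf_geometric summable_geometric)
  finally have "(\<integral>\<^sup>+\<omega>. Y \<omega> powr r \<partial>M) \<le> ennreal (1 + C * 2 powr r / (1 - \<rho>))"
    by simp
  moreover have "0 < 1 + C * 2 powr r / (1 - \<rho>)"
    using tail_const_nonneg[OF tail] \<rho> by (simp add: add_pos_nonneg)
  ultimately show ?thesis
    using that by blast
qed

lemma nn_integral_truncated_powr_log_bounded_of_tail:
  fixes Y :: "'a \<Rightarrow> real"
  assumes "Y \<in> borel_measurable M" "\<And>\<omega>. \<omega> \<in> space M \<Longrightarrow> 0 < Y \<omega>"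
    and tail: "\<And>x. 1 \<le> x \<Longrightarrow> prob {\<omega>\<in>space M. x \<le> Y \<omega>} \<le> C * x powr -q"
    and "0 < c" "c \<le> q"
  obtains D where "0 < D" "\<And>N. 1 \<le> N \<Longrightarrow>
    (\<integral>\<^sup>+\<omega>. min (Y \<omega>) N powr c * Y \<omega> powr (q - c) \<partial>M) \<le> ennreal (D * (1 + ln N))"
proof -
  have "0 \<le> C"
    using tail by (rule tail_const_nonneg)
  define E where "E = C * 2 powr q * (1 / ln 2 + 1 / (1 - 2 powr -c))"
  have "0 \<le> E"
    using \<open>0 \<le> C\<close> \<open>0 < c\<close> powr_less_one[of 2 "-c"] by (simp add: E_def)
  show ?thesis
  proof (rule that[of "1 + E"])
    show "0 < 1 + E"
      using \<open>0 \<le> E\<close> by simp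
    fix N :: real
    assume "1 \<le> N"
    note series = truncated_dyadic_series[OF \<open>0 < c\<close> \<open>c \<le> q\<close> \<open>0 \<le> C\<close> \<open>1 \<le> N\<close>]
    have "(\<integral>\<^sup>+\<omega>. min (Y \<omega>) N powr c * Y \<omega> powr (q - c) \<partial>M)
        \<le> ennreal (min 1 N powr c * 1 powr (q - c)
          + (\<Sum>k. min (2 ^ (k + 1)) N powr c * (2 ^ (k + 1)) powr (q - c) * (C * (2 ^ k) powr -q)))"
    proof (rule nn_integral_le_dyadic_tail_sum[where \<phi> = "\<lambda>y. min y N powr c * y powr (q - c)"])
      show "mono_on {0<..} (\<lambda>y. min y N powr c * y powr (q - c))"
        using \<open>0 < c\<close> \<open>c \<le> q\<close> \<open>1 \<le> N\<close> by (intro mono_onI mult_mono powr_mono2) auto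
      show "prob {\<omega>\<in>space M. 2 ^ k \<le> Y \<omega>} \<le> C * (2 ^ k) powr -q" for k :: nat
        by (rule tail) simp
    qed (use assms series(1) in auto)
    also have "\<dots> \<le> ennreal (1 + C * 2 powr q * ((1 + ln N) / ln 2 + 1 / (1 - 2 powr -c)))"
      using series(2) \<open>1 \<le> N\<close> by (intro ennreal_leI) simp
    also have "\<dots> \<le> ennreal ((1 + E) * (1 + ln N))"
    proof (intro ennreal_leI)
      have "0 \<le> ln N"
        using \<open>1 \<le> N\<close> by simp
      have "C * 2 powr q * ((1 + ln N) / ln 2 + 1 / (1 - 2 powr -c))
          \<le> C * 2 powr q * ((1 + ln N) / ln 2 + (1 + ln N) / (1 - 2 powr -c))"
        using \<open>0 \<le> ln N\<close> \<open>0 \<le> C\<close> \<open>0 < c\<close> powr_less_one[of 2 "-c"]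
        by (intro mult_left_mono add_left_mono divide_right_mono) auto
      also have "\<dots> = E * (1 + ln N)"
        by (simp add: E_def field_simps)
      finally show "1 + C * 2 powr q * ((1 + ln N) / ln 2 + 1 / (1 - 2 powr -c)) \<le> (1 + E) * (1 + ln N)"
        using \<open>0 \<le> ln N\<close> by (simp add: algebra_simps)
    qed
    finally show "(\<integral>\<^sup>+\<omega>. min (Y \<omega>) N powr c * Y \<omega> powr (q - c) \<partial>M) \<le> ennreal ((1 + E) * (1 + ln N))" .
  qed
qed

lemma integral_power_ratio_bigo:
  fixes Y :: "'a \<Rightarrow> real" and p :: nat and \<alpha> C :: real
  assumes [measurable]: "Y \<in> borel_measurable M" and Y_pos: "\<And>\<omega>. \<omega> \<in> space M \<Longrightarrow> 0 < Y \<omega>"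
    and tail: "\<And>x. 1 \<le> x \<Longrightarrow> prob {\<omega>\<in>space M. x \<le> Y \<omega>} \<le> C * x powr -(real p + \<alpha>)"
    and "1 \<le> p" "1 < \<alpha>" "\<alpha> \<le> real p + 2"
  shows "(\<lambda>n::nat. \<integral>\<omega>. Y \<omega> ^ (2 * p) / (Y \<omega> / real n + 1) ^ (p + 1) \<partial>M)
    \<in> O(\<lambda>n. real n powr (real p - \<alpha> + 2))"
proof -
  obtain B where "0 < B" and moment: "(\<integral>\<^sup>+\<omega>. Y \<omega> powr (real p + \<alpha> - 2) \<partial>M) \<le> ennreal B"
    using nn_integral_powr_bounded_of_tail[OF assms(1,2) tail, of "real p + \<alpha> - 2"] assms(4,5)
    by auto
  show ?thesis
  proof (rule bigo_integral_of_nn_integral_le[OF \<open>0 < B\<close>])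
    show "0 \<le> Y \<omega> ^ (2 * p) / (Y \<omega> / real n + 1) ^ (p + 1)" if "\<omega> \<in> space M" for n \<omega>
      using Y_pos[OF that] by simp
    show "\<forall>\<^sub>F n in sequentially. 0 \<le> real n powr (real p - \<alpha> + 2) \<and>
        (\<integral>\<^sup>+\<omega>. Y \<omega> ^ (2 * p) / (Y \<omega> / real n + 1) ^ (p + 1) \<partial>M)
          \<le> ennreal (B * real n powr (real p - \<alpha> + 2))"
      using eventually_ge_at_top[of 1]
    proof eventually_elim
      case (elim n)
      have "Y \<omega> ^ (2 * p) / (Y \<omega> / real n + 1) ^ (p + 1)
          \<le> real n powr (real p - \<alpha> + 2) * Y \<omega> powr (real p + \<alpha> - 2)" if "\<omega> \<in> space M" for \<omega>
        using Y_pos[OF that] elim assms(4-6) by (intro power_ratio_le_powr) auto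
      then have "(\<integral>\<^sup>+\<omega>. Y \<omega> ^ (2 * p) / (Y \<omega> / real n + 1) ^ (p + 1) \<partial>M)
          \<le> ennreal (real n powr (real p - \<alpha> + 2) * B)"
        using \<open>0 < B\<close> by (intro nn_integral_le_cmult_of_le[OF _ _ _ moment]) auto
      then show ?case
        by (simp add: mult.commute)
    qed
  qed
qed

lemma integral_power_ratio_times_square_bigo:
  fixes Y :: "'a \<Rightarrow> real" and p :: nat and \<alpha> C :: real
  assumes [measurable]: "Y \<in> borel_measurable M" and Y_pos: "\<And>\<omega>. \<omega> \<in> space M \<Longrightarrow> 0 < Y \<omega>"
    and tail: "\<And>x. 1 \<le> x \<Longrightarrow> prob {\<omega>\<in>space M. x \<le> Y \<omega>} \<le> C * x powr -(real p + \<alpha>)"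
    and "1 \<le> p" "1 < \<alpha>" "\<alpha> \<le> real p + 2"
  shows "(\<lambda>n::nat. \<integral>\<omega>. Y \<omega> ^ (2 * p) / (Y \<omega> / real n + 1) ^ (p + 1) * Y \<omega> ^ 2 \<partial>M)
    \<in> O(\<lambda>n. real n powr (real p - \<alpha> + 2) * ln (real n))"
proof -
  obtain D where "0 < D" and truncated_moment: "\<And>N. 1 \<le> N \<Longrightarrow>
      (\<integral>\<^sup>+\<omega>. min (Y \<omega>) N powr (\<alpha> - 1) * Y \<omega> powr (real p + 1) \<partial>M) \<le> ennreal (D * (1 + ln N))"
    using nn_integral_truncated_powr_log_bounded_of_tail[OF assms(1,2) tail, of "\<alpha> - 1"] assms(5)
    by auto
  show ?thesis
  proof (rule bigo_integral_of_nn_integral_le[of "2 * D"])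
    show "0 < 2 * D"
      using \<open>0 < D\<close> by simp
    show "0 \<le> Y \<omega> ^ (2 * p) / (Y \<omega> / real n + 1) ^ (p + 1) * Y \<omega> ^ 2" if "\<omega> \<in> space M" for n \<omega>
      using Y_pos[OF that] by simp
    show "\<forall>\<^sub>F n in sequentially. 0 \<le> real n powr (real p - \<alpha> + 2) * ln (real n) \<and>
        (\<integral>\<^sup>+\<omega>. Y \<omega> ^ (2 * p) / (Y \<omega> / real n + 1) ^ (p + 1) * Y \<omega> ^ 2 \<partial>M)
          \<le> ennreal (2 * D * (real n powr (real p - \<alpha> + 2) * ln (real n)))"
      using eventually_ge_at_top[of 3]
    proof eventually_elim
      case (elim n)
      have "1 \<le> ln (real n)"
        using elim exp_le by (subst ln_ge_iff) auto
      have pointwise: "Y \<omega> ^ (2 * p) / (Y \<omega> / real n + 1) ^ (p + 1) * Y \<omega> ^ 2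
          \<le> real n powr (real p - \<alpha> + 2) * (min (Y \<omega>) (real n) powr (\<alpha> - 1) * Y \<omega> powr (real p + 1))"
        if "\<omega> \<in> space M" for \<omega>
        using Y_pos[OF that] elim assms(4-6) by (intro power_ratio_times_square_le_truncated_powr) auto
      have "(\<integral>\<^sup>+\<omega>. Y \<omega> ^ (2 * p) / (Y \<omega> / real n + 1) ^ (p + 1) * Y \<omega> ^ 2 \<partial>M)
          \<le> ennreal (real n powr (real p - \<alpha> + 2) * (D * (1 + ln (real n))))"
        using \<open>0 < D\<close> \<open>1 \<le> ln (real n)\<close> elim
        by (intro nn_integral_le_cmult_of_le[OF _ pointwise _ truncated_moment]) auto
      also have "\<dots> \<le> ennreal (real n powr (real p - \<alpha> + 2) * (D * (2 * ln (real n))))"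
        using \<open>0 < D\<close> \<open>1 \<le> ln (real n)\<close> by (intro ennreal_leI mult_left_mono) auto
      also have "\<dots> = ennreal (2 * D * (real n powr (real p - \<alpha> + 2) * ln (real n)))"
        by (simp add: mult_ac)
      finally show ?case
        using \<open>1 \<le> ln (real n)\<close> by simp
    qed
  qed
qed

end

theorem lemma8:
  fixes M :: "'a measure" and X X1 :: "'a \<Rightarrow> real" and p :: nat and \<alpha> :: real
  assumes "prob_space M"
    and "X \<in> borel_measurable M" and "X1 \<in> borel_measurable M"
    and "prob_space.indep_var M borel X borel X1"
    and "distr M borel X = distr M borel X1"
    and "\<forall>\<omega>\<in>space M. X \<omega> > 0" and "\<forall>\<omega>\<in>space M. X1 \<omega> > 0"
    and "integrable M X" and "integral\<^sup>L M X = 1"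
    and "p \<ge> 2" and "1 < \<alpha>" and "\<alpha> \<le> real p + 2"
    and "(\<lambda>x. measure M {\<omega>\<in>space M. X \<omega> \<ge> x}) \<in> O[at_top](\<lambda>x. x powr (-(real p + \<alpha>)))"
  shows "(\<lambda>n::nat. integral\<^sup>L M (\<lambda>\<omega>. X1 \<omega> ^ (2*p) / (X1 \<omega> / real n + 1) ^ (p+1)))
           \<in> O[at_top](\<lambda>n. real n powr (real p - \<alpha> + 2)) \<and>
         (\<lambda>n::nat. integral\<^sup>L M (\<lambda>\<omega>. X1 \<omega> ^ (2*p) / (X1 \<omega> / real n + 1) ^ (p+1) * X1 \<omega> ^ 2))
           \<in> O[at_top](\<lambda>n. real n powr (real p - \<alpha> + 2) * ln (real n))"
proof -
  interpret prob_space M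
    by fact
  have "(\<lambda>x. prob {\<omega>\<in>space M. x \<le> X1 \<omega>}) \<in> O[at_top](\<lambda>x. x powr -(real p + \<alpha>))"
    using assms(13) prob_ge_eq_of_distr_eq[OF assms(2,3,5)] by simp
  then obtain C where tail: "\<And>x. 1 \<le> x \<Longrightarrow> prob {\<omega>\<in>space M. x \<le> X1 \<omega>} \<le> C * x powr -(real p + \<alpha>)"
    using assms(11) by (elim tail_bound_of_bigo) auto
  have "1 \<le> p"
    using assms(10) by simp
  show ?thesis
    using integral_power_ratio_bigo[OF assms(3) _ tail \<open>1 \<le> p\<close> assms(11,12)]
      integral_power_ratio_times_square_bigo[OF assms(3) _ tail \<open>1 \<le> p\<close> assms(11,12)] assms(7)
    by simp
qed

end
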